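(* Let $\gamma\in[0,1)$, let the MDP, encoder $e_\phi$, latent-space model $m_\phi$ and latent policy $\pi_\phi$ be arbitrary (as described in the context), and let $K\in\mathbb{N}$. Define $$\mathcal{L}^K_\phi=\mathbb{E}_{q^K_\phi(\tau)}\left[\sum_{t=0}^{K-1}\gamma^t\,\tilde r(s_t,a_t,s_{t+1})+\gamma^K\log Q(s_K,a_K)\right],$$ where $$\tilde r(s_t,a_t,s_{t+1})=(1-\gamma)\log r(s_t,a_t)+\log e_\phi(z_{t+1}\mid s_{t+1})-\log m_\phi(z_{t+1}\mid z_t,a_t).$$ Then $$\frac{1}{1-\gamma}\exp\big(\mathcal{L}^K_\phi\big)\le \mathbb{E}_{p_\phi(\tau)}\left[\sum_{t=0}^{\infty}\gamma^t r(s_t,a_t)\right].$$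
   Context: An MDP has states $s$, actions $a$, initial state distribution $p_0(s)$, transition density $p(s_{t+1}\mid s_t,a_t)$, a nonnegative reward function $r(s,a)\ge 0$, and discount $\gamma\in[0,1)$ (conventions $\log 0=-\infty$, $\exp(-\infty)=0$). There is a latent (representation) space. An encoder $e_\phi(z\mid s)$ is a conditional density over representations $z$ given a state; a latent-space model $m_\phi(z_{t+1}\mid z_t,a_t)$ is a conditional density over next representations; a latent policy $\pi_\phi(a\mid z)$ is a conditional distribution over actions given a representation. Trajectories are $\tau=(s_0,a_0,z_0,s_1,a_1,z_1,\dots)$. The true trajectory distribution is $$p_\phi(\tau)=p_0(s_0)\prod_{t=0}^\infty p(s_{t+1}\mid s_t,a_t)\,\pi_\phi(a_t\mid z_t)\,e_\phi(z_t\mid s_t).$$ The Q-function is $Q(s,a)=\mathbb{E}_{p_\phi}\big[(1-\gamma)\sum_{t=0}^\infty\gamma^t r(s_t,a_t)\mid s_0=s,a_0=a\big]$ (trajectory continuing under $p$, $e_\phi$, $\pi_\phi$). The $K$-step model distribution is $$q^K_\phi(\tau)=p_0(s_0)\,e_\phi(z_0\mid s_0)\,\pi_\phi(a_0\mid z_0)\prod_{t=1}^K p(s_t\mid s_{t-1},a_{t-1})\,m_\phi(z_t\mid z_{t-1},a_{t-1})\,\pi_\phi(a_t\mid z_t),$$ i.e. states follow the true dynamics while representations after time $0$ are generated by the latent model and actions depend only on representations. *)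

theory Defs
  imports "HOL-Probability.Probability"
begin

text \<open>States have type 's (base measure Ms), actions 'a (measurable
space Ma), representations 'z (base measure Mz). Densities:
  p0 s        = p_0(s)             w.r.t. Ms
  p s a s'    = p(s' | s, a)       w.r.t. Ms
  e s z       = e_phi(z | s)       w.r.t. Mz
  m z a z'    = m_phi(z' | z, a)   w.r.t. Mz
The latent policy is a Markov kernel pol z :: 'a measure (pi_phi(. | z)).\<close>

definition eln :: "ennreal \<Rightarrow> ereal" where
  "eln x = (if x = 0 then -\<infinity> else if x = \<infinity> then \<infinity> else ereal (ln (enn2real x)))"

definition eexp :: "ereal \<Rightarrow> ennreal" where
  "eexp x = (if x = -\<infinity> then 0 else if x = \<infinity> then \<infinity> else ennreal (exp (real_of_ereal x)))"

definition lsum :: "ereal list \<Rightarrow> ereal" where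
  "lsum xs = (if -\<infinity> \<in> set xs then -\<infinity> else sum_list xs)"

definition sa_init ::
  "'s measure \<Rightarrow> 'a measure \<Rightarrow> 'z measure \<Rightarrow> ('s \<Rightarrow> real) \<Rightarrow> ('s \<Rightarrow> 'z \<Rightarrow> real)
   \<Rightarrow> ('z \<Rightarrow> 'a measure) \<Rightarrow> ('s \<times> 'a) measure" where
  "sa_init Ms Ma Mz p0 e pol =
     density Ms (\<lambda>s. ennreal (p0 s)) \<bind> (\<lambda>s.
     density Mz (\<lambda>z. ennreal (e s z)) \<bind> (\<lambda>z.
     pol z \<bind> (\<lambda>a. return (Ms \<Otimes>\<^sub>M Ma) (s, a))))"

definition sa_step ::
  "'s measure \<Rightarrow> 'a measure \<Rightarrow> 'z measure \<Rightarrow> ('s \<Rightarrow> 'a \<Rightarrow> 's \<Rightarrow> real) \<Rightarrow> ('s \<Rightarrow> 'z \<Rightarrow> real)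
   \<Rightarrow> ('z \<Rightarrow> 'a measure) \<Rightarrow> 's \<times> 'a \<Rightarrow> ('s \<times> 'a) measure" where
  "sa_step Ms Ma Mz p e pol x = (case x of (s, a) \<Rightarrow>
     density Ms (\<lambda>s'. ennreal (p s a s')) \<bind> (\<lambda>s'.
     density Mz (\<lambda>z'. ennreal (e s' z')) \<bind> (\<lambda>z'.
     pol z' \<bind> (\<lambda>a'. return (Ms \<Otimes>\<^sub>M Ma) (s', a')))))"

primrec sa_iter ::
  "'s measure \<Rightarrow> 'a measure \<Rightarrow> 'z measure \<Rightarrow> ('s \<Rightarrow> 'a \<Rightarrow> 's \<Rightarrow> real) \<Rightarrow> ('s \<Rightarrow> 'z \<Rightarrow> real)
   \<Rightarrow> ('z \<Rightarrow> 'a measure) \<Rightarrow> nat \<Rightarrow> 's \<times> 'a \<Rightarrow> ('s \<times> 'a) measure" where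
  "sa_iter Ms Ma Mz p e pol 0 x = return (Ms \<Otimes>\<^sub>M Ma) x"
| "sa_iter Ms Ma Mz p e pol (Suc n) x =
     sa_iter Ms Ma Mz p e pol n x \<bind> sa_step Ms Ma Mz p e pol"

text \<open>Q(s,a) = E[(1-gamma) sum_t gamma^t r(s_t,a_t) | s_0 = s, a_0 = a]
 (sum and expectation exchanged by Tonelli, r >= 0).\<close>
definition Qfun ::
  "real \<Rightarrow> ('s \<Rightarrow> 'a \<Rightarrow> real) \<Rightarrow> 's measure \<Rightarrow> 'a measure \<Rightarrow> 'z measure
   \<Rightarrow> ('s \<Rightarrow> 'a \<Rightarrow> 's \<Rightarrow> real) \<Rightarrow> ('s \<Rightarrow> 'z \<Rightarrow> real) \<Rightarrow> ('z \<Rightarrow> 'a measure)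
   \<Rightarrow> 's \<Rightarrow> 'a \<Rightarrow> ennreal" where
  "Qfun \<gamma> r Ms Ma Mz p e pol s a =
     ennreal (1 - \<gamma>) * (\<Sum>t. ennreal (\<gamma> ^ t) *
        (\<integral>\<^sup>+ y. ennreal (r (fst y) (snd y)) \<partial>(sa_iter Ms Ma Mz p e pol t (s, a))))"

text \<open>E_{p_phi}[sum_t gamma^t r(s_t,a_t)] (sum and expectation exchanged by Tonelli).\<close>
definition true_return ::
  "real \<Rightarrow> ('s \<Rightarrow> 'a \<Rightarrow> real) \<Rightarrow> 's measure \<Rightarrow> 'a measure \<Rightarrow> 'z measure \<Rightarrow> ('s \<Rightarrow> real)
   \<Rightarrow> ('s \<Rightarrow> 'a \<Rightarrow> 's \<Rightarrow> real) \<Rightarrow> ('s \<Rightarrow> 'z \<Rightarrow> real) \<Rightarrow> ('z \<Rightarrow> 'a measure) \<Rightarrow> ennreal" where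
  "true_return \<gamma> r Ms Ma Mz p0 p e pol =
     (\<Sum>t. ennreal (\<gamma> ^ t) *
        (\<integral>\<^sup>+ y. ennreal (r (fst y) (snd y))
           \<partial>(sa_init Ms Ma Mz p0 e pol \<bind> sa_iter Ms Ma Mz p e pol t)))"

primrec q_traj ::
  "'s measure \<Rightarrow> 'a measure \<Rightarrow> 'z measure \<Rightarrow> ('s \<Rightarrow> real) \<Rightarrow> ('s \<Rightarrow> 'a \<Rightarrow> 's \<Rightarrow> real)
   \<Rightarrow> ('s \<Rightarrow> 'z \<Rightarrow> real) \<Rightarrow> ('z \<Rightarrow> 'a \<Rightarrow> 'z \<Rightarrow> real) \<Rightarrow> ('z \<Rightarrow> 'a measure)
   \<Rightarrow> nat \<Rightarrow> (nat \<Rightarrow> 's \<times> 'z \<times> 'a) measure" where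
  "q_traj Ms Ma Mz p0 p e m pol 0 =
     density Ms (\<lambda>s. ennreal (p0 s)) \<bind> (\<lambda>s.
     density Mz (\<lambda>z. ennreal (e s z)) \<bind> (\<lambda>z.
     pol z \<bind> (\<lambda>a.
     return (PiM {..0} (\<lambda>_. Ms \<Otimes>\<^sub>M (Mz \<Otimes>\<^sub>M Ma))) (\<lambda>i\<in>{..0::nat}. (s, z, a)))))"
| "q_traj Ms Ma Mz p0 p e m pol (Suc k) =
     q_traj Ms Ma Mz p0 p e m pol k \<bind> (\<lambda>\<omega>. case \<omega> k of (s, z, a) \<Rightarrow>
     density Ms (\<lambda>s'. ennreal (p s a s')) \<bind> (\<lambda>s'.
     density Mz (\<lambda>z'. ennreal (m z a z')) \<bind> (\<lambda>z'.
     pol z' \<bind> (\<lambda>a'.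
     return (PiM {..Suc k} (\<lambda>_. Ms \<Otimes>\<^sub>M (Mz \<Otimes>\<^sub>M Ma))) (fun_upd \<omega> (Suc k) (s', z', a'))))))"

definition LK_integrand ::
  "real \<Rightarrow> ('s \<Rightarrow> 'a \<Rightarrow> real) \<Rightarrow> ('s \<Rightarrow> 'z \<Rightarrow> real) \<Rightarrow> ('z \<Rightarrow> 'a \<Rightarrow> 'z \<Rightarrow> real)
   \<Rightarrow> ('s \<Rightarrow> 'a \<Rightarrow> ennreal) \<Rightarrow> nat \<Rightarrow> (nat \<Rightarrow> 's \<times> 'z \<times> 'a) \<Rightarrow> ereal" where
  "LK_integrand \<gamma> r e m Q K \<omega> =
     (let st = (\<lambda>t. fst (\<omega> t)); zt = (\<lambda>t. fst (snd (\<omega> t))); act = (\<lambda>t. snd (snd (\<omega> t)))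
      in lsum (concat (map (\<lambda>t.
            [ ereal (\<gamma> ^ t * (1 - \<gamma>)) * eln (ennreal (r (st t) (act t))),
              ereal (\<gamma> ^ t) * eln (ennreal (e (st (Suc t)) (zt (Suc t)))),
              - (ereal (\<gamma> ^ t) * eln (ennreal (m (zt t) (act t) (zt (Suc t))))) ]) [0..<K])
          @ [ereal (\<gamma> ^ K) * eln (Q (st K) (act K))]))"

definition epos :: "'b measure \<Rightarrow> ('b \<Rightarrow> ereal) \<Rightarrow> ennreal" where
  "epos M f = (\<integral>\<^sup>+ x. e2ennreal (f x) \<partial>M)"

definition eneg :: "'b measure \<Rightarrow> ('b \<Rightarrow> ereal) \<Rightarrow> ennreal" where
  "eneg M f = (\<integral>\<^sup>+ x. e2ennreal (- f x) \<partial>M)"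

text \<open>Expectation of an extended-real function (meaningful when not both parts are infinite).\<close>
definition eexpect :: "'b measure \<Rightarrow> ('b \<Rightarrow> ereal) \<Rightarrow> ereal" where
  "eexpect M f = enn2ereal (epos M f) - enn2ereal (eneg M f)"

end

theory Submission
  imports Defs
begin

text \<open>Write \<open>x^c\<close> for powers of extended nonnegative reals, with \<open>0^-1 = \<infinity>\<close> matching
  \<open>log 0 = -\<infinity>\<close>. The integrand of \<open>L^K\<close> is the logarithm of the trajectory weight
  \<open>W_K = (\<Prod>t<K. r_t^(\<gamma>^t (1 - \<gamma>)) (e_(t+1) / m_(t+1))^(\<gamma>^t)) Q(s_K, a_K)^(\<gamma>^K)\<close>,
  so Jensen's inequality gives \<open>exp L^K \<le> E_q[W_K]\<close>. Under \<open>q\<close> the weights form a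
  supermartingale: integrating out \<open>a_(k+1)\<close>, \<open>z_(k+1)\<close> and \<open>s_(k+1)\<close> with Jensen's inequality
  for the concave powers \<open>x^c\<close>, \<open>c \<le> 1\<close>, and changing measure from \<open>m\<close> to \<open>e\<close> leaves at most
  \<open>(r^(1 - \<gamma>) (E Q')^\<gamma>)^(\<gamma>^k)\<close>, which Young's inequality and the Bellman equation
  \<open>Q = (1 - \<gamma>) r + \<gamma> E Q'\<close> bound by \<open>Q^(\<gamma>^k)\<close>. Hence \<open>E_q[W_K] \<le> E_q[W_0] = E[Q(s_0, a_0)]\<close>,
  which is \<open>1 - \<gamma>\<close> times the expected return.\<close>

section \<open>Powers of extended nonnegative reals\<close>

definition epowr :: "ennreal \<Rightarrow> real \<Rightarrow> ennreal" where
  "epowr x c = eexp (ereal c * eln x)"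

lemma epowr_eq:
  assumes "0 \<le> c"
  shows "epowr x c = (if c = 0 then 1 else if x = \<top> then \<top> else ennreal (enn2real x powr c))"
proof -
  consider "c = 0" | "c > 0" "x = 0" | "c > 0" "x = \<top>" | "c > 0" "0 < enn2real x"
    using assms by (metis enn2real_positive_iff less_top
        not_gr_zero order.not_eq_order_implies_strict)
  then show ?thesis
    by cases (auto simp: epowr_def eexp_def eln_def powr_def zero_ereal_def)
qed

lemma epowr_0 [simp]: "epowr x 0 = 1"
  by (simp add: epowr_eq)

lemma epowr_1 [simp]: "epowr x 1 = x"
  by (cases x) (auto simp: epowr_eq)

lemma one_epowr [simp]: "0 \<le> c \<Longrightarrow> epowr 1 c = 1"
  by (simp add: epowr_eq)

lemma zero_epowr: "0 < c \<Longrightarrow> epowr 0 c = 0"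
  by (simp add: epowr_eq)

lemma top_epowr: "0 < c \<Longrightarrow> epowr \<top> c = \<top>"
  by (simp add: epowr_eq)

lemma ennreal_epowr: "0 < c \<Longrightarrow> 0 \<le> x \<Longrightarrow> epowr (ennreal x) c = ennreal (x powr c)"
  by (simp add: epowr_eq)

lemma epowr_mono: "0 \<le> c \<Longrightarrow> x \<le> y \<Longrightarrow> epowr x c \<le> epowr y c"
  by (cases x; cases y) (auto simp: epowr_eq top_unique intro!: ennreal_leI powr_mono2)

lemma epowr_mult:
  assumes "0 \<le> c"
  shows "epowr (x * y) c = epowr x c * epowr y c"
proof -
  consider "c = 0" | "c > 0" "x = 0 \<or> y = 0" | "c > 0" "x \<noteq> 0" "y \<noteq> 0" "x = \<top> \<or> y = \<top>"
    | u v where "c > 0" "x = ennreal u" "y = ennreal v" "0 \<le> u" "0 \<le> v"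
    using assms by (cases x; cases y) (auto simp: less_le)
  then show ?thesis
  proof cases
    case 3
    then have "epowr x c \<noteq> 0" "epowr y c \<noteq> 0"
      by (auto simp: epowr_eq enn2real_eq_0_iff)
    with 3 show ?thesis
      by (auto simp: top_epowr ennreal_mult_eq_top_iff)
  qed (auto simp: zero_epowr ennreal_epowr ennreal_mult[symmetric] powr_mult)
qed

lemma epowr_epowr: "0 \<le> c \<Longrightarrow> 0 \<le> d \<Longrightarrow> epowr (epowr x c) d = epowr x (c * d)"
  by (cases x) (auto simp: epowr_eq powr_powr)

lemma Youngs_inequality_epowr:
  assumes "0 \<le> c" "c \<le> 1"
  shows "epowr x c * epowr y (1 - c) \<le> ennreal c * x + ennreal (1 - c) * y"
proof -
  consider "c = 0" | "c = 1" | "0 < c" "c < 1" "x = 0 \<or> y = 0"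
    | "0 < c" "c < 1" "x \<noteq> 0" "y \<noteq> 0" "x = \<top> \<or> y = \<top>"
    | u v where "0 < c" "c < 1" "x = ennreal u" "y = ennreal v" "0 < u" "0 < v"
    using assms by (cases x; cases y) (auto simp: less_le)
  then show ?thesis
  proof cases
    case 5
    then have "u powr c * v powr (1 - c) \<le> c * u + (1 - c) * v"
      by (intro Youngs_inequality_0) auto
    with 5 show ?thesis
      by (simp add: ennreal_epowr ennreal_mult[symmetric] ennreal_plus[symmetric] ennreal_leI
          del: ennreal_plus)
  qed (auto simp: zero_epowr top_epowr ennreal_mult_top ennreal_top_mult)
qed

text \<open>Young's inequality gives the pointwise bound \<open>f^c \<le> \<mu>^c (c f / \<mu> + 1 - c)\<close>, where \<open>\<mu>\<close> is the
  mean of \<open>f\<close>.\<close>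
lemma nn_integral_epowr_le:
  assumes M: "prob_space M" and f[measurable]: "f \<in> borel_measurable M" and c: "0 \<le> c" "c \<le> 1"
  shows "(\<integral>\<^sup>+x. epowr (f x) c \<partial>M) \<le> epowr (\<integral>\<^sup>+x. f x \<partial>M) c"
proof -
  define \<mu> where "\<mu> = (\<integral>\<^sup>+x. f x \<partial>M)"
  consider "c = 0" | "c > 0" "\<mu> = \<top>" | "c > 0" "\<mu> = 0" | m where "c > 0" "\<mu> = ennreal m" "0 < m"
    using c by (cases \<mu>) (auto simp: ennreal_eq_0_iff less_le)
  then show ?thesis
  proof cases
    case 1
    then show ?thesis using M by (simp add: prob_space.emeasure_space_1)
  next
    case 2
    then show ?thesis by (simp add: \<mu>_def[symmetric] top_epowr)
  next
    case 3
    then have "AE x in M. f x = 0" unfolding \<mu>_def by (simp add: nn_integral_0_iff_AE)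
    then have "(\<integral>\<^sup>+x. epowr (f x) c \<partial>M) = (\<integral>\<^sup>+x. 0 \<partial>M)"
      using \<open>c > 0\<close> by (intro nn_integral_cong_AE) (auto simp: zero_epowr)
    then show ?thesis by simp
  next
    case 4
    have tangent: "epowr (f x) c \<le> epowr \<mu> c * (ennreal c * (f x * ennreal (1 / m)) + ennreal (1 - c))" for x
    proof -
      have "ennreal m * ennreal (1 / m) = 1"
        using 4 by (simp add: ennreal_mult[symmetric])
      then have "f x = \<mu> * (f x * ennreal (1 / m))"
        using 4 by (metis mult.assoc mult.commute mult.right_neutral)
      then have "epowr (f x) c = epowr \<mu> c * (epowr (f x * ennreal (1 / m)) c * epowr 1 (1 - c))"
        using c by (metis mult.right_neutral epowr_mult one_epowr diff_ge_0_iff_ge)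
      also have "\<dots> \<le> epowr \<mu> c * (ennreal c * (f x * ennreal (1 / m)) + ennreal (1 - c) * 1)"
        by (intro mult_left_mono Youngs_inequality_epowr c) auto
      finally show ?thesis by simp
    qed
    have "(\<integral>\<^sup>+x. epowr (f x) c \<partial>M)
        \<le> (\<integral>\<^sup>+x. epowr \<mu> c * (ennreal c * (f x * ennreal (1 / m)) + ennreal (1 - c)) \<partial>M)"
      by (intro nn_integral_mono tangent)
    also have "\<dots> = epowr \<mu> c * (ennreal c * (\<mu> * ennreal (1 / m)) + ennreal (1 - c))"
      using M by (simp add: nn_integral_cmult nn_integral_add nn_integral_multc \<mu>_def
          prob_space.emeasure_space_1)
    also have "\<dots> = epowr \<mu> c"
      using 4 c by (simp add: ennreal_mult[symmetric] ennreal_plus[symmetric] del: ennreal_plus)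
    finally show ?thesis unfolding \<mu>_def .
  qed
qed

section \<open>The extended exponential and Jensen's inequality\<close>

lemma eexp_measurable [measurable]: "eexp \<in> borel_measurable borel"
  unfolding eexp_def by measurable

lemma eln_measurable [measurable]: "eln \<in> borel_measurable borel"
  unfolding eln_def by measurable

lemma epowr_measurable [measurable]:
  "f \<in> borel_measurable M \<Longrightarrow> (\<lambda>x. epowr (f x) c) \<in> borel_measurable M"
  unfolding epowr_def by measurable

lemma eln_eexp [simp]: "eln (eexp x) = x"
  by (cases x) (auto simp: eln_def eexp_def)

lemma eln_inverse: "eln (inverse x) = - eln x"
proof -
  consider "x = 0" | "x = \<top>" | u where "x = ennreal u" "0 < u"
    by (cases x) (auto simp: less_le)
  then show ?thesis
    by cases (auto simp: eln_def inverse_ennreal ln_inverse enn2real_eq_0_iff)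
qed

lemma mult_inverse_le_one_ennreal: "(x :: ennreal) * inverse x \<le> 1"
  by (cases "x = 0 \<or> x = \<top>") (auto simp: ennreal_divide_self less_top divide_ennreal_def[symmetric])

lemma eexp_add: "x \<noteq> -\<infinity> \<Longrightarrow> y \<noteq> -\<infinity> \<Longrightarrow> eexp (x + y) = eexp x * eexp y"
  by (cases x; cases y) (auto simp: eexp_def exp_add ennreal_mult' ennreal_top_mult ennreal_mult_top)

lemma eexp_sum_list: "-\<infinity> \<notin> set xs \<Longrightarrow> eexp (sum_list xs) = prod_list (map eexp xs)"
proof (induction xs)
  case Nil
  then show ?case by (simp add: eexp_def zero_ereal_def)
next
  case (Cons x xs)
  have "sum_list xs \<noteq> -\<infinity>"
    using Cons.prems by (induction xs) (auto simp: zero_ereal_def)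
  moreover have "x \<noteq> -\<infinity>"
    using Cons.prems by auto
  ultimately show ?case
    using Cons by (simp add: eexp_add)
qed

lemma eexp_lsum: "eexp (lsum xs) = prod_list (map eexp xs)"
proof (cases "-\<infinity> \<in> set xs")
  case True
  then have "0 \<in> set (map eexp xs)" by (force simp: eexp_def)
  with True show ?thesis by (simp add: lsum_def eexp_def prod_list_zero_iff)
qed (simp add: lsum_def eexp_sum_list)

lemma e2ennreal_le_eexp: "e2ennreal y \<le> eexp y"
proof (cases y)
  case (real u)
  have "u \<le> exp u" using exp_ge_add_one_self[of u] by linarith
  with real show ?thesis by (simp add: eexp_def ennreal_leI)
qed (auto simp: eexp_def e2ennreal_neg)

lemma prod_list_map_concat_upt:
  "prod_list (map f (concat (map g [0..<n]))) = (\<Prod>t<n. prod_list (map f (g t)))"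
  by (induction n) (auto simp: lessThan_Suc mult.commute)

lemma eexp_mult_eln: "eexp (ereal c * eln x) = epowr x c"
  by (simp add: epowr_def)

lemma eexp_uminus_mult_eln: "eexp (- (ereal c * eln x)) = epowr (inverse x) c"
  by (simp add: epowr_def eln_inverse)

text \<open>The tangent line of \<open>exp\<close> at \<open>c\<close>, \<open>exp c (1 + y - c) \<le> exp y\<close>, with every term moved
  to the side where it is nonnegative.\<close>
lemma exp_tangent_ennreal:
  "ennreal (exp c) * (1 + e2ennreal y + ennreal (max (-c) 0))
     \<le> eexp y + ennreal (exp c) * (e2ennreal (-y) + ennreal (max c 0))"
proof (cases y)
  case (real u)
  have "exp c * (1 + (u - c)) \<le> exp c * exp (u - c)"
    using exp_ge_add_one_self[of "u - c"] by (intro mult_left_mono) auto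
  then have "exp c * (1 + max u 0 + max (-c) 0) \<le> exp u + exp c * (max (-u) 0 + max c 0)"
    by (auto simp: max_def algebra_simps exp_diff)
  then have "ennreal (exp c * (1 + max u 0 + max (-c) 0))
      \<le> ennreal (exp u + exp c * (max (-u) 0 + max c 0))"
    by (rule ennreal_leI)
  moreover have "e2ennreal y = ennreal (max u 0)" "e2ennreal (-y) = ennreal (max (-u) 0)"
    using real by (auto simp: max_def ennreal_neg)
  ultimately show ?thesis
    using real by (simp add: eexp_def ennreal_mult ennreal_plus add_nonneg_nonneg)
qed (auto simp: eexp_def ennreal_mult_top)

lemma exp_le_nn_integral_eexp:
  assumes M: "prob_space M" and f[measurable]: "f \<in> borel_measurable M"
    and pos: "epos M f = ennreal u" and neg: "eneg M f = ennreal v" and "0 \<le> u" "0 \<le> v"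
  shows "ennreal (exp (u - v)) \<le> (\<integral>\<^sup>+x. eexp (f x) \<partial>M)"
proof -
  define c where "c = u - v"
  have "ennreal (exp c) * (1 + ennreal u + ennreal (max (-c) 0))
      = (\<integral>\<^sup>+x. ennreal (exp c) * (1 + e2ennreal (f x) + ennreal (max (-c) 0)) \<partial>M)"
    using M pos by (simp add: epos_def nn_integral_cmult nn_integral_add prob_space.emeasure_space_1)
  also have "\<dots> \<le> (\<integral>\<^sup>+x. eexp (f x) + ennreal (exp c) * (e2ennreal (- f x) + ennreal (max c 0)) \<partial>M)"
    by (intro nn_integral_mono exp_tangent_ennreal)
  also have "\<dots> = (\<integral>\<^sup>+x. eexp (f x) \<partial>M) + ennreal (exp c) * (ennreal v + ennreal (max c 0))"
    using M neg by (simp add: eneg_def nn_integral_cmult nn_integral_add prob_space.emeasure_space_1)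
  finally have le: "ennreal (exp c) * (1 + ennreal u + ennreal (max (-c) 0))
      \<le> (\<integral>\<^sup>+x. eexp (f x) \<partial>M) + ennreal (exp c) * (ennreal v + ennreal (max c 0))" .
  have "ennreal u + ennreal (max (-c) 0) = ennreal v + ennreal (max c 0)"
    using \<open>0 \<le> u\<close> \<open>0 \<le> v\<close> by (simp add: c_def max_def ennreal_plus[symmetric] del: ennreal_plus)
  then have "ennreal (exp c) * (1 + ennreal u + ennreal (max (-c) 0))
      = ennreal (exp c) * (ennreal v + ennreal (max c 0)) + ennreal (exp c)"
    by (metis add.assoc add.commute distrib_left mult.right_neutral)
  with le have "ennreal (exp c) * (ennreal v + ennreal (max c 0)) + ennreal (exp c)
      \<le> ennreal (exp c) * (ennreal v + ennreal (max c 0)) + (\<integral>\<^sup>+x. eexp (f x) \<partial>M)"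
    by (simp only: add.commute)
  moreover have "ennreal (exp c) * (ennreal v + ennreal (max c 0)) \<noteq> \<infinity>"
    by (simp add: ennreal_mult_eq_top_iff)
  ultimately show ?thesis
    unfolding c_def by (simp only: ennreal_add_left_cancel_le) simp
qed

lemma eexp_eexpect_le:
  assumes M: "prob_space M" and f[measurable]: "f \<in> borel_measurable M"
    and defined: "epos M f \<noteq> \<top> \<or> eneg M f \<noteq> \<top>"
  shows "eexp (eexpect M f) \<le> (\<integral>\<^sup>+x. eexp (f x) \<partial>M)"
proof -
  consider "epos M f = \<top>" "eneg M f \<noteq> \<top>" | "eneg M f = \<top>" "epos M f \<noteq> \<top>"
    | u v where "epos M f = ennreal u" "eneg M f = ennreal v" "0 \<le> u" "0 \<le> v"
    using defined by (cases "epos M f"; cases "eneg M f") auto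
  then show ?thesis
  proof cases
    case 1
    have "epos M f \<le> (\<integral>\<^sup>+x. eexp (f x) \<partial>M)"
      unfolding epos_def by (intro nn_integral_mono e2ennreal_le_eexp)
    with 1 show ?thesis by (cases "eneg M f") (auto simp: eexpect_def eexp_def)
  next
    case 2
    then show ?thesis by (cases "epos M f") (auto simp: eexpect_def eexp_def)
  next
    case 3
    then show ?thesis
      using exp_le_nn_integral_eexp[OF M f] by (simp add: eexpect_def eexp_def)
  qed
qed

section \<open>Markov kernels\<close>

lemma measurable_density_prob_algebra:
  assumes sf: "sigma_finite_measure N"
    and f[measurable]: "(\<lambda>(x, y). f x y) \<in> borel_measurable (X \<Otimes>\<^sub>M N)"
    and norm: "\<And>x. x \<in> space X \<Longrightarrow> (\<integral>\<^sup>+y. ennreal (f x y) \<partial>N) = 1"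
  shows "(\<lambda>x. density N (\<lambda>y. ennreal (f x y))) \<in> X \<rightarrow>\<^sub>M prob_algebra N"
proof (rule measurable_prob_algebraI)
  have fx[measurable]: "f x \<in> borel_measurable N" if "x \<in> space X" for x
    using measurable_Pair2[OF f that] by simp
  show prob: "prob_space (density N (\<lambda>y. ennreal (f x y)))" if "x \<in> space X" for x
    by (rule prob_spaceI) (simp add: emeasure_density that norm)
  show "(\<lambda>x. density N (\<lambda>y. ennreal (f x y))) \<in> X \<rightarrow>\<^sub>M subprob_algebra N"
  proof (rule measurable_subprob_algebra)
    fix A assume [measurable]: "A \<in> sets N"
    have "(\<lambda>x. \<integral>\<^sup>+y. ennreal (f x y) * indicator A y \<partial>N) \<in> borel_measurable X"
      by (rule sigma_finite_measure.borel_measurable_nn_integral[OF sf]) measurable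
    then show "(\<lambda>x. emeasure (density N (\<lambda>y. ennreal (f x y))) A) \<in> borel_measurable X"
      by (rule measurable_cong[THEN iffD1, rotated]) (simp add: emeasure_density)
  qed (auto intro: prob_space_imp_subprob_space prob)
qed

lemma kernel_prob_space:
  "K \<in> A \<rightarrow>\<^sub>M prob_algebra B \<Longrightarrow> x \<in> space A \<Longrightarrow> prob_space (K x)"
  using measurable_space[of K A "prob_algebra B" x] by (simp add: space_prob_algebra)

lemma kernel_sets:
  "K \<in> A \<rightarrow>\<^sub>M prob_algebra B \<Longrightarrow> x \<in> space A \<Longrightarrow> sets (K x) = sets B"
  using measurable_space[of K A "prob_algebra B" x] by (simp add: space_prob_algebra)

lemma measurable_bind_bind_return:
  assumes K: "K \<in> A \<rightarrow>\<^sub>M prob_algebra B" and L: "L \<in> B \<rightarrow>\<^sub>M prob_algebra C"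
    and g: "(\<lambda>((x, y), z). g x y z) \<in> (A \<Otimes>\<^sub>M B) \<Otimes>\<^sub>M C \<rightarrow>\<^sub>M R"
  shows "(\<lambda>x. K x \<bind> (\<lambda>y. L y \<bind> (\<lambda>z. return R (g x y z)))) \<in> A \<rightarrow>\<^sub>M prob_algebra R"
proof (rule measurable_bind_prob_space2[OF K])
  have "(\<lambda>(xy, z). return R (g (fst xy) (snd xy) z)) \<in> (A \<Otimes>\<^sub>M B) \<Otimes>\<^sub>M C \<rightarrow>\<^sub>M prob_algebra R"
    using measurable_compose[OF g measurable_return_prob_space] by (simp add: case_prod_beta')
  from measurable_bind_prob_space2[OF measurable_compose[OF measurable_snd L] this]
  show "(\<lambda>(x, y). L y \<bind> (\<lambda>z. return R (g x y z))) \<in> A \<Otimes>\<^sub>M B \<rightarrow>\<^sub>M prob_algebra R"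
    by (simp add: case_prod_beta')
qed

lemma nn_integral_bind_return:
  assumes M: "sets M = sets C" and h: "h \<in> C \<rightarrow>\<^sub>M R" and f: "f \<in> borel_measurable R"
  shows "(\<integral>\<^sup>+w. f w \<partial>(M \<bind> (\<lambda>z. return R (h z)))) = (\<integral>\<^sup>+z. f (h z) \<partial>M)"
proof -
  have "(\<integral>\<^sup>+w. f w \<partial>(M \<bind> (\<lambda>z. return R (h z)))) = (\<integral>\<^sup>+z. \<integral>\<^sup>+w. f w \<partial>return R (h z) \<partial>M)"
    using measurable_compose[OF h return_measurable]
    by (intro nn_integral_bind[OF f]) (simp add: measurable_cong_sets[OF M refl])
  also have "\<dots> = (\<integral>\<^sup>+z. f (h z) \<partial>M)"
    using measurable_space[OF h]
    by (intro nn_integral_cong) (simp add: nn_integral_return f sets_eq_imp_space_eq[OF M])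
  finally show ?thesis .
qed

lemma nn_integral_bind_bind_return:
  assumes N: "sets N = sets A"
    and K: "K \<in> A \<rightarrow>\<^sub>M prob_algebra B" and L: "L \<in> B \<rightarrow>\<^sub>M prob_algebra C"
    and g: "(\<lambda>((x, y), z). g x y z) \<in> (A \<Otimes>\<^sub>M B) \<Otimes>\<^sub>M C \<rightarrow>\<^sub>M R"
    and f[measurable]: "f \<in> borel_measurable R"
  shows "(\<integral>\<^sup>+w. f w \<partial>(N \<bind> (\<lambda>x. K x \<bind> (\<lambda>y. L y \<bind> (\<lambda>z. return R (g x y z))))))
    = (\<integral>\<^sup>+x. \<integral>\<^sup>+y. \<integral>\<^sup>+z. f (g x y z) \<partial>L y \<partial>K x \<partial>N)"
proof -
  have gx: "(\<lambda>(y, z). g x y z) \<in> B \<Otimes>\<^sub>M C \<rightarrow>\<^sub>M R" if "x \<in> space A" for x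
    using measurable_compose[OF measurable_Pair[OF measurable_Pair[OF measurable_const[OF that]
          measurable_fst] measurable_snd] g]
    by (simp add: case_prod_beta')
  have "(\<integral>\<^sup>+w. f w \<partial>(N \<bind> (\<lambda>x. K x \<bind> (\<lambda>y. L y \<bind> (\<lambda>z. return R (g x y z))))))
      = (\<integral>\<^sup>+x. \<integral>\<^sup>+w. f w \<partial>(K x \<bind> (\<lambda>y. L y \<bind> (\<lambda>z. return R (g x y z)))) \<partial>N)"
    using measurable_prob_algebraD[OF measurable_bind_bind_return[OF K L g]]
    by (intro nn_integral_bind[OF f]) (simp add: measurable_cong_sets[OF N refl])
  also have "\<dots> = (\<integral>\<^sup>+x. \<integral>\<^sup>+y. \<integral>\<^sup>+z. f (g x y z) \<partial>L y \<partial>K x \<partial>N)"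
  proof (intro nn_integral_cong)
    fix x assume "x \<in> space N"
    then have x: "x \<in> space A" using sets_eq_imp_space_eq[OF N] by simp
    have "(\<lambda>y. L y \<bind> (\<lambda>z. return R (g x y z))) \<in> B \<rightarrow>\<^sub>M prob_algebra R"
      using measurable_bind_prob_space2[OF L, of "\<lambda>y z. return R (g x y z)"]
        measurable_compose[OF gx[OF x] measurable_return_prob_space]
      by (simp add: case_prod_beta')
    then have "(\<integral>\<^sup>+w. f w \<partial>(K x \<bind> (\<lambda>y. L y \<bind> (\<lambda>z. return R (g x y z)))))
        = (\<integral>\<^sup>+y. \<integral>\<^sup>+w. f w \<partial>(L y \<bind> (\<lambda>z. return R (g x y z))) \<partial>K x)"
      by (intro nn_integral_bind[OF f]) (simp add: measurable_cong_sets[OF kernel_sets[OF K x] refl]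
          measurable_prob_algebraD)
    also have "\<dots> = (\<integral>\<^sup>+y. \<integral>\<^sup>+z. f (g x y z) \<partial>L y \<partial>K x)"
    proof (intro nn_integral_cong)
      fix y assume "y \<in> space (K x)"
      then have y: "y \<in> space B" using sets_eq_imp_space_eq[OF kernel_sets[OF K x]] by simp
      show "(\<integral>\<^sup>+w. f w \<partial>(L y \<bind> (\<lambda>z. return R (g x y z)))) = (\<integral>\<^sup>+z. f (g x y z) \<partial>L y)"
        using measurable_Pair2[OF gx[OF x] y]
        by (intro nn_integral_bind_return[OF kernel_sets[OF L y] _ f]) simp
    qed
    finally show "(\<integral>\<^sup>+w. f w \<partial>(K x \<bind> (\<lambda>y. L y \<bind> (\<lambda>z. return R (g x y z)))))
        = (\<integral>\<^sup>+y. \<integral>\<^sup>+z. f (g x y z) \<partial>L y \<partial>K x)" .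
  qed
  finally show ?thesis .
qed

section \<open>The latent-space MDP\<close>

locale latent_mdp =
  fixes \<gamma> :: real
    and Ms :: "'s measure" and Ma :: "'a measure" and Mz :: "'z measure"
    and p0 :: "'s \<Rightarrow> real" and p :: "'s \<Rightarrow> 'a \<Rightarrow> 's \<Rightarrow> real"
    and r :: "'s \<Rightarrow> 'a \<Rightarrow> real"
    and e :: "'s \<Rightarrow> 'z \<Rightarrow> real" and m :: "'z \<Rightarrow> 'a \<Rightarrow> 'z \<Rightarrow> real"
    and pol :: "'z \<Rightarrow> 'a measure"
  assumes gamma_nonneg: "0 \<le> \<gamma>" and gamma_less_1: "\<gamma> < 1"
    and sfS: "sigma_finite_measure Ms" and sfZ: "sigma_finite_measure Mz"
    and p0_meas: "p0 \<in> borel_measurable Ms"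
    and p0_norm: "(\<integral>\<^sup>+ s. ennreal (p0 s) \<partial>Ms) = 1"
    and p_meas: "(\<lambda>(s, a, s'). p s a s') \<in> borel_measurable (Ms \<Otimes>\<^sub>M (Ma \<Otimes>\<^sub>M Ms))"
    and p_norm: "\<And>s a. s \<in> space Ms \<Longrightarrow> a \<in> space Ma \<Longrightarrow> (\<integral>\<^sup>+ s'. ennreal (p s a s') \<partial>Ms) = 1"
    and r_meas: "(\<lambda>(s, a). r s a) \<in> borel_measurable (Ms \<Otimes>\<^sub>M Ma)"
    and e_meas: "(\<lambda>(s, z). e s z) \<in> borel_measurable (Ms \<Otimes>\<^sub>M Mz)"
    and e_norm: "\<And>s. s \<in> space Ms \<Longrightarrow> (\<integral>\<^sup>+ z. ennreal (e s z) \<partial>Mz) = 1"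
    and m_meas: "(\<lambda>(z, a, z'). m z a z') \<in> borel_measurable (Mz \<Otimes>\<^sub>M (Ma \<Otimes>\<^sub>M Mz))"
    and m_norm: "\<And>z a. z \<in> space Mz \<Longrightarrow> a \<in> space Ma \<Longrightarrow> (\<integral>\<^sup>+ z'. ennreal (m z a z') \<partial>Mz) = 1"
    and pol_kernel: "pol \<in> Mz \<rightarrow>\<^sub>M prob_algebra Ma"
begin

abbreviation "SA \<equiv> Ms \<Otimes>\<^sub>M Ma"
abbreviation "dyn x \<equiv> density Ms (\<lambda>s'. ennreal (p (fst x) (snd x) s'))"
abbreviation "enc s \<equiv> density Mz (\<lambda>z. ennreal (e s z))"
abbreviation "model x \<equiv> density Mz (\<lambda>z'. ennreal (m (fst x) (snd x) z'))"
abbreviation "init \<equiv> sa_init Ms Ma Mz p0 e pol"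
abbreviation "step \<equiv> sa_step Ms Ma Mz p e pol"
abbreviation "iter \<equiv> sa_iter Ms Ma Mz p e pol"
abbreviation "Q \<equiv> Qfun \<gamma> r Ms Ma Mz p e pol"

lemma r_measurable [measurable]: "(\<lambda>x. r (fst x) (snd x)) \<in> borel_measurable SA"
  using r_meas by (simp add: case_prod_beta')

lemma e_measurable [measurable]: "(\<lambda>x. e (fst x) (snd x)) \<in> borel_measurable (Ms \<Otimes>\<^sub>M Mz)"
  using e_meas by (simp add: case_prod_beta')

lemma m_measurable [measurable]:
  "(\<lambda>(x, z'). m (fst x) (snd x) z') \<in> borel_measurable ((Mz \<Otimes>\<^sub>M Ma) \<Otimes>\<^sub>M Mz)"
  using measurable_compose[OF _ m_meas, of "\<lambda>x. (fst (fst x), snd (fst x), snd x)"]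
  by (simp add: case_prod_beta')

lemma dyn_kernel: "dyn \<in> SA \<rightarrow>\<^sub>M prob_algebra Ms"
proof (rule measurable_density_prob_algebra[OF sfS])
  show "(\<lambda>(x, s'). p (fst x) (snd x) s') \<in> borel_measurable (SA \<Otimes>\<^sub>M Ms)"
    using measurable_compose[OF _ p_meas, of "\<lambda>x. (fst (fst x), snd (fst x), snd x)"]
    by (simp add: case_prod_beta')
qed (auto simp: space_pair_measure p_norm)

lemma enc_kernel: "enc \<in> Ms \<rightarrow>\<^sub>M prob_algebra Mz"
  by (rule measurable_density_prob_algebra[OF sfZ e_meas]) (simp add: e_norm)

lemma model_kernel: "model \<in> Mz \<Otimes>\<^sub>M Ma \<rightarrow>\<^sub>M prob_algebra Mz"
  by (rule measurable_density_prob_algebra[OF sfZ])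
     (auto simp: case_prod_beta' space_pair_measure m_norm)

lemma init_state_prob: "density Ms (\<lambda>s. ennreal (p0 s)) \<in> space (prob_algebra Ms)"
proof -
  have "emeasure (density Ms (\<lambda>s. ennreal (p0 s))) (space Ms) = 1"
    using p0_meas p0_norm by (simp add: emeasure_density nn_integral_cong[OF indicator_inter_arith])
  then show ?thesis
    by (auto simp: space_prob_algebra intro!: prob_spaceI)
qed

lemma step_eq: "step x = dyn x \<bind> (\<lambda>s'. enc s' \<bind> (\<lambda>z'. pol z' \<bind> (\<lambda>a'. return SA (s', a'))))"
  by (cases x) (simp add: sa_step_def)

lemma init_eq: "init = density Ms (\<lambda>s. ennreal (p0 s)) \<bind> (\<lambda>s. enc s \<bind> (\<lambda>z. pol z \<bind> (\<lambda>a. return SA (s, a))))"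
  by (simp add: sa_init_def)

lemma pair_measurable: "(\<lambda>((s, z), a). (s, a)) \<in> (Ms \<Otimes>\<^sub>M Mz) \<Otimes>\<^sub>M Ma \<rightarrow>\<^sub>M SA"
proof -
  have "(\<lambda>x. (fst (fst x), snd x)) \<in> (Ms \<Otimes>\<^sub>M Mz) \<Otimes>\<^sub>M Ma \<rightarrow>\<^sub>M SA"
    by measurable
  then show ?thesis
    by (simp add: case_prod_beta')
qed

lemma step_kernel: "step \<in> SA \<rightarrow>\<^sub>M prob_algebra SA"
  unfolding step_eq
  by (rule measurable_bind_prob_space[OF dyn_kernel
        measurable_bind_bind_return[OF enc_kernel pol_kernel pair_measurable]])

lemma init_prob: "init \<in> space (prob_algebra SA)"
  unfolding init_eq
  using measurable_space[OF measurable_bind_prob_space[OF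
        measurable_const[OF init_state_prob, of "count_space UNIV"]
        measurable_bind_bind_return[OF enc_kernel pol_kernel pair_measurable]]]
  by simp

lemma nn_integral_step:
  assumes x: "x \<in> space SA" and f: "f \<in> borel_measurable SA"
  shows "(\<integral>\<^sup>+y. f y \<partial>step x) = (\<integral>\<^sup>+s'. \<integral>\<^sup>+z'. \<integral>\<^sup>+a'. f (s', a') \<partial>pol z' \<partial>enc s' \<partial>dyn x)"
  unfolding step_eq
  by (rule nn_integral_bind_bind_return[OF _ enc_kernel pol_kernel pair_measurable f]) simp

lemma nn_integral_init:
  assumes f: "f \<in> borel_measurable SA"
  shows "(\<integral>\<^sup>+y. f y \<partial>init)
    = (\<integral>\<^sup>+s. \<integral>\<^sup>+z. \<integral>\<^sup>+a. f (s, a) \<partial>pol z \<partial>enc s \<partial>density Ms (\<lambda>s. ennreal (p0 s)))"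
  unfolding init_eq
  by (rule nn_integral_bind_bind_return[OF _ enc_kernel pol_kernel pair_measurable f]) simp

lemma sets_step: "x \<in> space SA \<Longrightarrow> sets (step x) = sets SA"
  by (rule kernel_sets[OF step_kernel])

lemma sets_init: "sets init = sets SA"
  using init_prob by (simp add: space_prob_algebra)

lemma iter_kernel: "iter n \<in> SA \<rightarrow>\<^sub>M subprob_algebra SA"
proof -
  have "iter n \<in> SA \<rightarrow>\<^sub>M prob_algebra SA"
    by (induction n) (simp_all add: measurable_return_prob_space
        measurable_bind_prob_space[OF _ step_kernel] del: measurable_return2)
  then show ?thesis
    by (rule measurable_prob_algebraD)
qed

lemma iter_Suc_left: "x \<in> space SA \<Longrightarrow> iter (Suc n) x = step x \<bind> iter n"
proof (induction n)
  case 0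
  have "iter (Suc 0) x = step x"
    using 0 by (simp add: bind_return[OF measurable_prob_algebraD[OF step_kernel]])
  also have "\<dots> = step x \<bind> return SA"
    by (rule bind_return''[symmetric]) (simp add: sets_step 0)
  finally show ?case by simp
next
  case (Suc n)
  have "iter (Suc (Suc n)) x = (step x \<bind> iter n) \<bind> step"
    using Suc by simp
  also have "\<dots> = step x \<bind> (\<lambda>y. iter n y \<bind> step)"
    using measurable_prob_algebraD[OF step_kernel] iter_kernel
    by (intro bind_assoc[where N=SA and R=SA]) (simp_all add: measurable_cong_sets[OF sets_step[OF Suc.prems]])
  finally show ?case by simp
qed

definition expected_reward :: "nat \<Rightarrow> 's \<times> 'a \<Rightarrow> ennreal" where
  "expected_reward t x = (\<integral>\<^sup>+y. ennreal (r (fst y) (snd y)) \<partial>iter t x)"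

definition discounted_return :: "'s \<times> 'a \<Rightarrow> ennreal" where
  "discounted_return x = (\<Sum>t. ennreal (\<gamma> ^ t) * expected_reward t x)"

lemma expected_reward_measurable [measurable]: "expected_reward t \<in> borel_measurable SA"
  unfolding expected_reward_def
  by (rule measurable_compose[OF iter_kernel nn_integral_measurable_subprob_algebra]) measurable

lemma expected_reward_0: "x \<in> space SA \<Longrightarrow> expected_reward 0 x = ennreal (r (fst x) (snd x))"
  by (simp add: expected_reward_def nn_integral_return)

lemma expected_reward_Suc:
  "x \<in> space SA \<Longrightarrow> expected_reward (Suc t) x = (\<integral>\<^sup>+y. expected_reward t y \<partial>step x)"
  unfolding expected_reward_def iter_Suc_left
  by (subst nn_integral_bind[where B=SA]) (auto simp: measurable_cong_sets[OF sets_step refl] iter_kernel)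

lemma discounted_return_measurable [measurable]: "discounted_return \<in> borel_measurable SA"
  unfolding discounted_return_def by measurable

lemma Q_eq_discounted_return: "Q (fst x) (snd x) = ennreal (1 - \<gamma>) * discounted_return x"
  by (simp add: Qfun_def discounted_return_def expected_reward_def)

lemma Q_measurable [measurable]: "(\<lambda>x. Q (fst x) (snd x)) \<in> borel_measurable SA"
  unfolding Q_eq_discounted_return by measurable

lemma discounted_return_bellman:
  assumes x: "x \<in> space SA"
  shows "discounted_return x
    = ennreal (r (fst x) (snd x)) + ennreal \<gamma> * (\<integral>\<^sup>+y. discounted_return y \<partial>step x)"
proof -
  have "discounted_return x
      = (\<Sum>t. ennreal (\<gamma> ^ Suc t) * expected_reward (Suc t) x) + ennreal (\<gamma> ^ 0) * expected_reward 0 x"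
    unfolding discounted_return_def by (subst suminf_offset[of _ 1]) auto
  also have "(\<Sum>t. ennreal (\<gamma> ^ Suc t) * expected_reward (Suc t) x)
      = (\<Sum>t. ennreal \<gamma> * (\<integral>\<^sup>+y. ennreal (\<gamma> ^ t) * expected_reward t y \<partial>step x))"
    using x gamma_nonneg
    by (simp add: expected_reward_Suc nn_integral_cmult measurable_cong_sets[OF sets_step refl]
        ennreal_mult mult.assoc)
  also have "\<dots> = ennreal \<gamma> * (\<integral>\<^sup>+y. discounted_return y \<partial>step x)"
    unfolding discounted_return_def using x
    by (simp add: nn_integral_suminf measurable_cong_sets[OF sets_step refl])
  finally show ?thesis
    using x by (simp add: expected_reward_0 add.commute)
qed

lemma true_return_eq: "true_return \<gamma> r Ms Ma Mz p0 p e pol = (\<integral>\<^sup>+x. discounted_return x \<partial>init)"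
proof -
  have "true_return \<gamma> r Ms Ma Mz p0 p e pol = (\<Sum>t. ennreal (\<gamma> ^ t) * (\<integral>\<^sup>+x. expected_reward t x \<partial>init))"
    unfolding true_return_def expected_reward_def
    by (subst nn_integral_bind[where B=SA]) (auto simp: measurable_cong_sets[OF sets_init refl] iter_kernel)
  also have "\<dots> = (\<integral>\<^sup>+x. discounted_return x \<partial>init)"
    unfolding discounted_return_def
    by (simp add: nn_integral_suminf nn_integral_cmult measurable_cong_sets[OF sets_init refl])
  finally show ?thesis .
qed

definition Q_given_sz :: "'s \<Rightarrow> 'z \<Rightarrow> ennreal" where
  "Q_given_sz s z = (\<integral>\<^sup>+a. Q s a \<partial>pol z)"

definition Q_given_s :: "'s \<Rightarrow> ennreal" where
  "Q_given_s s = (\<integral>\<^sup>+z. Q_given_sz s z \<partial>enc s)"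

lemma Q_bellman:
  assumes x: "x \<in> space SA"
  shows "Q (fst x) (snd x)
    = ennreal (1 - \<gamma>) * ennreal (r (fst x) (snd x)) + ennreal \<gamma> * (\<integral>\<^sup>+s'. Q_given_s s' \<partial>dyn x)"
proof -
  have "(\<integral>\<^sup>+y. Q (fst y) (snd y) \<partial>step x) = (\<integral>\<^sup>+s'. Q_given_s s' \<partial>dyn x)"
    by (simp add: nn_integral_step[OF x] Q_given_s_def Q_given_sz_def)
  moreover have "Q (fst x) (snd x)
      = ennreal (1 - \<gamma>) * ennreal (r (fst x) (snd x)) + ennreal \<gamma> * (\<integral>\<^sup>+y. Q (fst y) (snd y) \<partial>step x)"
    unfolding Q_eq_discounted_return discounted_return_bellman[OF x]
    by (auto simp: nn_integral_cmult measurable_cong_sets[OF sets_step[OF x] refl] distrib_left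
        mult.left_commute)
  ultimately show ?thesis by simp
qed

lemma Q_given_sz_measurable [measurable]:
  "(\<lambda>x. Q_given_sz (fst x) (snd x)) \<in> borel_measurable (Ms \<Otimes>\<^sub>M Mz)"
proof -
  have "(\<lambda>x. \<integral>\<^sup>+a. Q (fst x) a \<partial>pol (snd x)) \<in> borel_measurable (Ms \<Otimes>\<^sub>M Mz)"
  proof (rule nn_integral_measurable_subprob_algebra2)
    show "(\<lambda>(x, a). Q (fst x) a) \<in> borel_measurable ((Ms \<Otimes>\<^sub>M Mz) \<Otimes>\<^sub>M Ma)"
    proof -
      have "(\<lambda>y. (fst (fst y), snd y)) \<in> (Ms \<Otimes>\<^sub>M Mz) \<Otimes>\<^sub>M Ma \<rightarrow>\<^sub>M SA"
        by measurable
      from measurable_compose[OF this Q_measurable] show ?thesis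
        by (simp add: case_prod_beta')
    qed
    show "(\<lambda>x. pol (snd x)) \<in> Ms \<Otimes>\<^sub>M Mz \<rightarrow>\<^sub>M subprob_algebra Ma"
      by (rule measurable_compose[OF measurable_snd measurable_prob_algebraD[OF pol_kernel]])
  qed
  then show ?thesis
    by (simp add: Q_given_sz_def)
qed

lemma Q_given_s_measurable [measurable]: "Q_given_s \<in> borel_measurable Ms"
  unfolding Q_given_s_def
  by (rule nn_integral_measurable_subprob_algebra2[OF _ measurable_prob_algebraD[OF enc_kernel]])
     (use Q_given_sz_measurable in \<open>simp add: case_prod_beta'\<close>)

lemma e_measurable_at: "s' \<in> space Ms \<Longrightarrow> (\<lambda>z'. e s' z') \<in> borel_measurable Mz"
  using measurable_Pair2[OF e_measurable] by simp

lemma m_measurable_at: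
  assumes "(z, a) \<in> space (Mz \<Otimes>\<^sub>M Ma)"
  shows "(\<lambda>z'. m z a z') \<in> borel_measurable Mz"
  using measurable_Pair2[OF m_measurable assms] by simp

lemma Q_given_sz_measurable_at: "s' \<in> space Ms \<Longrightarrow> (\<lambda>z'. Q_given_sz s' z') \<in> borel_measurable Mz"
  using measurable_Pair2[OF Q_given_sz_measurable] by simp

text \<open>Changing measure from \<open>m(\<cdot> | z, a)\<close> to \<open>e(\<cdot> | s')\<close> costs nothing because \<open>m (e / m) \<le> e\<close>.\<close>
lemma nn_integral_model_le_Q_given_s:
  assumes s': "s' \<in> space Ms" and za: "(z, a) \<in> space (Mz \<Otimes>\<^sub>M Ma)"
  shows "(\<integral>\<^sup>+z'. ennreal (e s' z') * inverse (ennreal (m z a z')) * epowr (Q_given_sz s' z') \<gamma>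
      \<partial>model (z, a)) \<le> epowr (Q_given_s s') \<gamma>"
proof -
  note [measurable] = e_measurable_at[OF s'] m_measurable_at[OF za] Q_given_sz_measurable_at[OF s']
  have "(\<integral>\<^sup>+z'. ennreal (e s' z') * inverse (ennreal (m z a z')) * epowr (Q_given_sz s' z') \<gamma>
      \<partial>model (z, a))
      = (\<integral>\<^sup>+z'. (ennreal (m z a z') * inverse (ennreal (m z a z')))
          * (ennreal (e s' z') * epowr (Q_given_sz s' z') \<gamma>) \<partial>Mz)"
    by (simp add: nn_integral_density ac_simps)
  also have "\<dots> \<le> (\<integral>\<^sup>+z'. ennreal (e s' z') * epowr (Q_given_sz s' z') \<gamma> \<partial>Mz)"
    using mult_right_mono[OF mult_inverse_le_one_ennreal zero_le] by (intro nn_integral_mono) simp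
  also have "\<dots> = (\<integral>\<^sup>+z'. epowr (Q_given_sz s' z') \<gamma> \<partial>enc s')"
    by (simp add: nn_integral_density)
  also have "\<dots> \<le> epowr (Q_given_s s') \<gamma>"
    unfolding Q_given_s_def using kernel_prob_space[OF enc_kernel s'] gamma_nonneg gamma_less_1
    by (intro nn_integral_epowr_le) auto
  finally show ?thesis .
qed

lemma nn_integral_pol_model_le_Q_given_s:
  assumes s': "s' \<in> space Ms" and za: "(z, a) \<in> space (Mz \<Otimes>\<^sub>M Ma)" and c: "0 \<le> c" "c \<le> 1"
  shows "(\<integral>\<^sup>+z'. \<integral>\<^sup>+a'. epowr (ennreal (e s' z')) c * epowr (inverse (ennreal (m z a z'))) c
            * epowr (Q s' a') (\<gamma> * c) \<partial>pol z' \<partial>model (z, a))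
    \<le> epowr (Q_given_s s') (\<gamma> * c)"
proof -
  have \<gamma>: "0 \<le> \<gamma>" "\<gamma> \<le> 1" using gamma_nonneg gamma_less_1 by auto
  have \<gamma>c: "0 \<le> \<gamma> * c" "\<gamma> * c \<le> 1" using \<gamma> c by (auto simp: mult_le_one)
  note [measurable] = e_measurable_at[OF s'] m_measurable_at[OF za] Q_given_sz_measurable_at[OF s']
  define X where "X z' = ennreal (e s' z') * inverse (ennreal (m z a z')) * epowr (Q_given_sz s' z') \<gamma>" for z'
  have "(\<integral>\<^sup>+a'. epowr (ennreal (e s' z')) c * epowr (inverse (ennreal (m z a z'))) c
            * epowr (Q s' a') (\<gamma> * c) \<partial>pol z') \<le> epowr (X z') c" if z': "z' \<in> space Mz" for z'
  proof -
    have Q_a: "(\<lambda>a'. Q s' a') \<in> borel_measurable (pol z')"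
      using measurable_Pair2[OF Q_measurable s']
      by (simp add: measurable_cong_sets[OF kernel_sets[OF pol_kernel z'] refl])
    have "(\<integral>\<^sup>+a'. epowr (Q s' a') (\<gamma> * c) \<partial>pol z') \<le> epowr (Q_given_sz s' z') (\<gamma> * c)"
      unfolding Q_given_sz_def by (rule nn_integral_epowr_le[OF kernel_prob_space[OF pol_kernel z'] Q_a \<gamma>c])
    then show ?thesis
      unfolding X_def using c \<gamma> Q_a
      by (simp add: nn_integral_cmult epowr_mult epowr_epowr mult.commute mult_left_mono)
  qed
  then have "(\<integral>\<^sup>+z'. \<integral>\<^sup>+a'. epowr (ennreal (e s' z')) c * epowr (inverse (ennreal (m z a z'))) c
            * epowr (Q s' a') (\<gamma> * c) \<partial>pol z' \<partial>model (z, a))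
      \<le> (\<integral>\<^sup>+z'. epowr (X z') c \<partial>model (z, a))"
    by (intro nn_integral_mono) simp
  also have "\<dots> \<le> epowr (\<integral>\<^sup>+z'. X z' \<partial>model (z, a)) c"
    using kernel_prob_space[OF model_kernel za] by (intro nn_integral_epowr_le c) (auto simp: X_def)
  also have "\<dots> \<le> epowr (epowr (Q_given_s s') \<gamma>) c"
    unfolding X_def by (intro epowr_mono c nn_integral_model_le_Q_given_s s' za)
  also have "\<dots> = epowr (Q_given_s s') (\<gamma> * c)"
    using c \<gamma> by (simp add: epowr_epowr)
  finally show ?thesis .
qed

lemma Q_epowr_step_le:
  assumes s: "s \<in> space Ms" and z: "z \<in> space Mz" and a: "a \<in> space Ma" and c: "0 \<le> c" "c \<le> 1"
  shows "epowr (ennreal (r s a)) (c * (1 - \<gamma>))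
      * (\<integral>\<^sup>+s'. \<integral>\<^sup>+z'. \<integral>\<^sup>+a'. epowr (ennreal (e s' z')) c * epowr (inverse (ennreal (m z a z'))) c
            * epowr (Q s' a') (\<gamma> * c) \<partial>pol z' \<partial>model (z, a) \<partial>dyn (s, a))
    \<le> epowr (Q s a) c"
proof -
  have \<gamma>: "0 \<le> \<gamma>" "\<gamma> \<le> 1" using gamma_nonneg gamma_less_1 by auto
  have \<gamma>c: "0 \<le> \<gamma> * c" "\<gamma> * c \<le> 1" using \<gamma> c by (auto simp: mult_le_one)
  have sa: "(s, a) \<in> space SA" and za: "(z, a) \<in> space (Mz \<Otimes>\<^sub>M Ma)"
    using s z a by (simp_all add: space_pair_measure)
  define R where "R = epowr (ennreal (r s a)) (c * (1 - \<gamma>))"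
  define EQ where "EQ = (\<integral>\<^sup>+s'. Q_given_s s' \<partial>dyn (s, a))"
  have "R * (\<integral>\<^sup>+s'. \<integral>\<^sup>+z'. \<integral>\<^sup>+a'. epowr (ennreal (e s' z')) c * epowr (inverse (ennreal (m z a z'))) c
            * epowr (Q s' a') (\<gamma> * c) \<partial>pol z' \<partial>model (z, a) \<partial>dyn (s, a))
      \<le> R * (\<integral>\<^sup>+s'. epowr (Q_given_s s') (\<gamma> * c) \<partial>dyn (s, a))"
    using nn_integral_pol_model_le_Q_given_s[OF _ za c] by (intro mult_left_mono nn_integral_mono) simp_all
  also have "\<dots> \<le> R * epowr EQ (\<gamma> * c)"
    unfolding EQ_def using kernel_prob_space[OF dyn_kernel sa]
    by (intro mult_left_mono nn_integral_epowr_le \<gamma>c) auto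
  also have "\<dots> = epowr (epowr EQ \<gamma> * epowr (ennreal (r s a)) (1 - \<gamma>)) c"
    unfolding R_def using c \<gamma> by (simp add: epowr_mult epowr_epowr mult.commute)
  also have "\<dots> \<le> epowr (ennreal \<gamma> * EQ + ennreal (1 - \<gamma>) * ennreal (r s a)) c"
    by (intro epowr_mono Youngs_inequality_epowr c \<gamma>)
  also have "\<dots> = epowr (Q s a) c"
    using Q_bellman[OF sa] by (simp add: EQ_def add.commute)
  finally show ?thesis
    unfolding R_def .
qed

abbreviation "SZA \<equiv> Ms \<Otimes>\<^sub>M (Mz \<Otimes>\<^sub>M Ma)"
abbreviation "Traj k \<equiv> PiM {..k::nat} (\<lambda>_. SZA)"
abbreviation "q k \<equiv> q_traj Ms Ma Mz p0 p e m pol k"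

definition q_step :: "nat \<Rightarrow> (nat \<Rightarrow> 's \<times> 'z \<times> 'a) \<Rightarrow> (nat \<Rightarrow> 's \<times> 'z \<times> 'a) measure" where
  "q_step k \<omega> = dyn (fst (\<omega> k), snd (snd (\<omega> k))) \<bind> (\<lambda>s'. model (snd (\<omega> k)) \<bind>
      (\<lambda>z'. pol z' \<bind> (\<lambda>a'. return (Traj (Suc k)) (fun_upd \<omega> (Suc k) (s', z', a')))))"

lemma q_Suc: "q (Suc k) = q k \<bind> q_step k"
  by (simp add: q_step_def[abs_def] split_beta')

lemma traj_upd_measurable:
  "(\<lambda>((x, z'), a'). fun_upd (fst x) (Suc k) (snd x, z', a'))
    \<in> ((Traj k \<Otimes>\<^sub>M Ms) \<Otimes>\<^sub>M Mz) \<Otimes>\<^sub>M Ma \<rightarrow>\<^sub>M Traj (Suc k)"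
proof -
  have "(\<lambda>y. fun_upd (fst (fst (fst y))) (Suc k) (snd (fst (fst y)), snd (fst y), snd y))
      \<in> ((Traj k \<Otimes>\<^sub>M Ms) \<Otimes>\<^sub>M Mz) \<Otimes>\<^sub>M Ma \<rightarrow>\<^sub>M Traj (Suc k)"
    by (rule measurable_fun_upd[where J="{..k}"]) (auto simp: atMost_Suc)
  then show ?thesis
    by (simp add: case_prod_beta')
qed

lemma q_step_kernel: "q_step k \<in> Traj k \<rightarrow>\<^sub>M prob_algebra (Traj (Suc k))"
proof -
  have [measurable]: "(\<lambda>\<omega>. \<omega> k) \<in> Traj k \<rightarrow>\<^sub>M SZA"
    by (rule measurable_component_singleton) simp
  have dyn_k: "(\<lambda>\<omega>. dyn (fst (\<omega> k), snd (snd (\<omega> k)))) \<in> Traj k \<rightarrow>\<^sub>M prob_algebra Ms"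
    by (rule measurable_compose[OF _ dyn_kernel]) measurable
  have model_k: "(\<lambda>x. model (snd (fst x k))) \<in> Traj k \<Otimes>\<^sub>M Ms \<rightarrow>\<^sub>M prob_algebra Mz"
    by (rule measurable_compose[OF _ model_kernel]) measurable
  from measurable_bind_bind_return[OF model_k pol_kernel traj_upd_measurable]
  show ?thesis
    unfolding q_step_def
    by (intro measurable_bind_prob_space2[OF dyn_k]) (simp add: case_prod_beta')
qed

lemma traj_0_measurable: "(\<lambda>((s, z), a). \<lambda>i\<in>{..0::nat}. (s, z, a)) \<in> (Ms \<Otimes>\<^sub>M Mz) \<Otimes>\<^sub>M Ma \<rightarrow>\<^sub>M Traj 0"
proof -
  have "(\<lambda>y. \<lambda>i\<in>{..0::nat}. (fst (fst y), snd (fst y), snd y)) \<in> (Ms \<Otimes>\<^sub>M Mz) \<Otimes>\<^sub>M Ma \<rightarrow>\<^sub>M Traj 0"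
    by measurable
  then show ?thesis
    by (simp add: case_prod_beta')
qed

lemma q_prob: "q k \<in> space (prob_algebra (Traj k))"
proof (induction k)
  case 0
  show ?case
    using measurable_space[OF measurable_bind_prob_space[OF
          measurable_const[OF init_state_prob, of "count_space UNIV"]
          measurable_bind_bind_return[OF enc_kernel pol_kernel traj_0_measurable]]]
    by simp
next
  case (Suc k)
  show ?case
    using measurable_space[OF measurable_bind_prob_space[OF
          measurable_const[OF Suc, of "count_space UNIV"] q_step_kernel]]
    unfolding q_Suc by simp
qed

lemma nn_integral_q_0:
  assumes f: "f \<in> borel_measurable (Traj 0)"
  shows "(\<integral>\<^sup>+\<omega>. f \<omega> \<partial>q 0) = (\<integral>\<^sup>+s. \<integral>\<^sup>+z. \<integral>\<^sup>+a. f (\<lambda>i\<in>{..0}. (s, z, a))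
      \<partial>pol z \<partial>enc s \<partial>density Ms (\<lambda>s. ennreal (p0 s)))"
  by (simp only: q_traj.simps)
     (rule nn_integral_bind_bind_return[OF _ enc_kernel pol_kernel traj_0_measurable f], simp)

lemma nn_integral_q_step:
  assumes \<omega>: "\<omega> \<in> space (Traj k)" and f: "f \<in> borel_measurable (Traj (Suc k))"
  shows "(\<integral>\<^sup>+y. f y \<partial>q_step k \<omega>) = (\<integral>\<^sup>+s'. \<integral>\<^sup>+z'. \<integral>\<^sup>+a'. f (fun_upd \<omega> (Suc k) (s', z', a'))
      \<partial>pol z' \<partial>model (snd (\<omega> k)) \<partial>dyn (fst (\<omega> k), snd (snd (\<omega> k))))"
proof -
  have "\<omega> k \<in> space SZA"
    using \<omega> by (auto simp: space_PiM)
  then have "snd (\<omega> k) \<in> space (Mz \<Otimes>\<^sub>M Ma)"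
    by (auto simp: space_pair_measure)
  then have K: "(\<lambda>_. model (snd (\<omega> k))) \<in> Ms \<rightarrow>\<^sub>M prob_algebra Mz"
    using measurable_space[OF model_kernel] by simp
  have g: "(\<lambda>((s', z'), a'). fun_upd \<omega> (Suc k) (s', z', a')) \<in> (Ms \<Otimes>\<^sub>M Mz) \<Otimes>\<^sub>M Ma \<rightarrow>\<^sub>M Traj (Suc k)"
    using measurable_compose[OF _ traj_upd_measurable, of "\<lambda>((s', z'), a'). (((\<omega>, s'), z'), a')"] \<omega>
    by (simp add: case_prod_beta')
  show ?thesis
    unfolding q_step_def by (rule nn_integral_bind_bind_return[OF _ K pol_kernel g f]) simp
qed

text \<open>\<open>exp\<close> of the \<open>t\<close>-th summand of the integrand of \<open>L^K\<close>.\<close>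
definition weight_factor :: "nat \<Rightarrow> (nat \<Rightarrow> 's \<times> 'z \<times> 'a) \<Rightarrow> ennreal" where
  "weight_factor t \<omega> = epowr (ennreal (r (fst (\<omega> t)) (snd (snd (\<omega> t))))) (\<gamma> ^ t * (1 - \<gamma>))
     * epowr (ennreal (e (fst (\<omega> (Suc t))) (fst (snd (\<omega> (Suc t)))))) (\<gamma> ^ t)
     * epowr (inverse (ennreal (m (fst (snd (\<omega> t))) (snd (snd (\<omega> t))) (fst (snd (\<omega> (Suc t))))))) (\<gamma> ^ t)"

definition traj_weight :: "nat \<Rightarrow> (nat \<Rightarrow> 's \<times> 'z \<times> 'a) \<Rightarrow> ennreal" where
  "traj_weight k \<omega> = (\<Prod>t<k. weight_factor t \<omega>) * epowr (Q (fst (\<omega> k)) (snd (snd (\<omega> k)))) (\<gamma> ^ k)"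

lemma eexp_LK_integrand: "eexp (LK_integrand \<gamma> r e m Q K \<omega>) = traj_weight K \<omega>"
  unfolding LK_integrand_def Let_def eexp_lsum
  by (simp add: prod_list_map_concat_upt traj_weight_def weight_factor_def eexp_mult_eln
      eexp_uminus_mult_eln mult.assoc)

lemma Q_at_measurable:
  assumes "t \<le> k"
  shows "(\<lambda>\<omega>. Q (fst (\<omega> t)) (snd (snd (\<omega> t)))) \<in> borel_measurable (Traj k)"
proof -
  have [measurable]: "(\<lambda>\<omega>. \<omega> t) \<in> Traj k \<rightarrow>\<^sub>M SZA"
    using assms by (intro measurable_component_singleton) simp
  have "(\<lambda>\<omega>. (fst (\<omega> t), snd (snd (\<omega> t)))) \<in> Traj k \<rightarrow>\<^sub>M SA"
    by measurable
  from measurable_compose[OF this Q_measurable] show ?thesis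
    by simp
qed

lemma traj_weight_measurable [measurable]: "traj_weight k \<in> borel_measurable (Traj k)"
proof -
  note r_meas [measurable] e_meas [measurable]
  have "weight_factor t \<in> borel_measurable (Traj k)" if "t < k" for t
  proof -
    have [measurable]: "(\<lambda>\<omega>. \<omega> t) \<in> Traj k \<rightarrow>\<^sub>M SZA" "(\<lambda>\<omega>. \<omega> (Suc t)) \<in> Traj k \<rightarrow>\<^sub>M SZA"
      using that by (auto intro: measurable_component_singleton)
    show ?thesis
      unfolding weight_factor_def by measurable
  qed
  with Q_at_measurable[of k k] show ?thesis
    unfolding traj_weight_def by measurable
qed

lemma LK_integrand_measurable: "LK_integrand \<gamma> r e m Q K \<in> borel_measurable (Traj K)"
proof -
  have "LK_integrand \<gamma> r e m Q K = (\<lambda>\<omega>. eln (traj_weight K \<omega>))"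
    by (metis eexp_LK_integrand eln_eexp)
  then show ?thesis
    by simp
qed

lemma nn_integral_q_0_traj_weight: "(\<integral>\<^sup>+\<omega>. traj_weight 0 \<omega> \<partial>q 0) = (\<integral>\<^sup>+x. Q (fst x) (snd x) \<partial>init)"
proof -
  have "(\<integral>\<^sup>+\<omega>. traj_weight 0 \<omega> \<partial>q 0) = (\<integral>\<^sup>+s. \<integral>\<^sup>+z. \<integral>\<^sup>+a. traj_weight 0 (\<lambda>i\<in>{..0}. (s, z, a))
      \<partial>pol z \<partial>enc s \<partial>density Ms (\<lambda>s. ennreal (p0 s)))"
    by (rule nn_integral_q_0) measurable
  also have "\<dots> = (\<integral>\<^sup>+x. Q (fst x) (snd x) \<partial>init)"
    by (simp add: nn_integral_init traj_weight_def)
  finally show ?thesis .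
qed

lemma traj_weight_Suc_fun_upd:
  assumes "\<omega> k = (s, z, a)"
  shows "traj_weight (Suc k) (fun_upd \<omega> (Suc k) (s', z', a'))
    = (\<Prod>t<k. weight_factor t \<omega>) * epowr (ennreal (r s a)) (\<gamma> ^ k * (1 - \<gamma>))
      * (epowr (ennreal (e s' z')) (\<gamma> ^ k) * epowr (inverse (ennreal (m z a z'))) (\<gamma> ^ k)
        * epowr (Q s' a') (\<gamma> * \<gamma> ^ k))"
proof -
  have "(\<Prod>t<k. weight_factor t (fun_upd \<omega> (Suc k) (s', z', a'))) = (\<Prod>t<k. weight_factor t \<omega>)"
    by (intro prod.cong) (auto simp: weight_factor_def)
  then show ?thesis
    using assms by (simp add: traj_weight_def weight_factor_def ac_simps)
qed

lemma nn_integral_q_step_traj_weight_le: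
  assumes \<omega>: "\<omega> \<in> space (Traj k)"
  shows "(\<integral>\<^sup>+y. traj_weight (Suc k) y \<partial>q_step k \<omega>) \<le> traj_weight k \<omega>"
proof -
  have "\<omega> k \<in> space SZA"
    using \<omega> by (auto simp: space_PiM)
  then obtain s z a where \<omega>k: "\<omega> k = (s, z, a)" and s: "s \<in> space Ms" and z: "z \<in> space Mz" and a: "a \<in> space Ma"
    by (auto simp: space_pair_measure)
  define C where "C = (\<Prod>t<k. weight_factor t \<omega>) * epowr (ennreal (r s a)) (\<gamma> ^ k * (1 - \<gamma>))"
  define W where "W y = epowr (ennreal (e (fst (y (Suc k))) (fst (snd (y (Suc k)))))) (\<gamma> ^ k)
    * epowr (inverse (ennreal (m z a (fst (snd (y (Suc k))))))) (\<gamma> ^ k)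
    * epowr (Q (fst (y (Suc k))) (snd (snd (y (Suc k))))) (\<gamma> * \<gamma> ^ k)" for y
  have [measurable]: "(\<lambda>y. y (Suc k)) \<in> Traj (Suc k) \<rightarrow>\<^sub>M SZA"
    by (intro measurable_component_singleton) simp
  have m_za: "(\<lambda>z'. m z a z') \<in> borel_measurable Mz"
    using z a by (intro m_measurable_at) (simp add: space_pair_measure)
  note e_meas [measurable] Q_at_measurable[of "Suc k" "Suc k", simplified, measurable]
  have [measurable]: "(\<lambda>y. m z a (fst (snd (y (Suc k))))) \<in> borel_measurable (Traj (Suc k))"
    by (rule measurable_compose[OF _ m_za]) measurable
  have W_measurable [measurable]: "W \<in> borel_measurable (Traj (Suc k))"
    unfolding W_def by measurable
  have "traj_weight (Suc k) (fun_upd \<omega> (Suc k) x) = C * W (fun_upd \<omega> (Suc k) x)" for x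
    by (cases x) (simp add: traj_weight_Suc_fun_upd[where \<omega>=\<omega> and k=k, OF \<omega>k] C_def W_def)
  then have "(\<integral>\<^sup>+y. traj_weight (Suc k) y \<partial>q_step k \<omega>) = (\<integral>\<^sup>+y. C * W y \<partial>q_step k \<omega>)"
    by (simp add: nn_integral_q_step[OF \<omega>])
  also have "\<dots> = C * (\<integral>\<^sup>+y. W y \<partial>q_step k \<omega>)"
    by (simp add: nn_integral_cmult measurable_cong_sets[OF kernel_sets[OF q_step_kernel \<omega>] refl])
  also have "\<dots> = (\<Prod>t<k. weight_factor t \<omega>) * (epowr (ennreal (r s a)) (\<gamma> ^ k * (1 - \<gamma>))
      * (\<integral>\<^sup>+s'. \<integral>\<^sup>+z'. \<integral>\<^sup>+a'. epowr (ennreal (e s' z')) (\<gamma> ^ k)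
          * epowr (inverse (ennreal (m z a z'))) (\<gamma> ^ k) * epowr (Q s' a') (\<gamma> * \<gamma> ^ k)
        \<partial>pol z' \<partial>model (z, a) \<partial>dyn (s, a)))"
    by (simp add: C_def nn_integral_q_step[OF \<omega>] W_def \<omega>k mult.assoc)
  also have "\<dots> \<le> (\<Prod>t<k. weight_factor t \<omega>) * epowr (Q s a) (\<gamma> ^ k)"
    using gamma_nonneg gamma_less_1
    by (intro mult_left_mono Q_epowr_step_le s z a) (auto intro: power_le_one)
  also have "\<dots> = traj_weight k \<omega>"
    by (simp add: traj_weight_def \<omega>k)
  finally show ?thesis .
qed

lemma nn_integral_traj_weight_le: "(\<integral>\<^sup>+\<omega>. traj_weight k \<omega> \<partial>q k) \<le> (\<integral>\<^sup>+x. Q (fst x) (snd x) \<partial>init)"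
proof (induction k)
  case 0
  show ?case
    by (rule eq_refl[OF nn_integral_q_0_traj_weight])
next
  case (Suc k)
  have sets_q: "sets (q k) = sets (Traj k)"
    using q_prob by (simp add: space_prob_algebra)
  have "(\<integral>\<^sup>+\<omega>. traj_weight (Suc k) \<omega> \<partial>q (Suc k)) = (\<integral>\<^sup>+\<omega>. \<integral>\<^sup>+y. traj_weight (Suc k) y \<partial>q_step k \<omega> \<partial>q k)"
    unfolding q_Suc
    by (rule nn_integral_bind[OF traj_weight_measurable])
       (simp add: measurable_cong_sets[OF sets_q refl] measurable_prob_algebraD[OF q_step_kernel])
  also have "\<dots> \<le> (\<integral>\<^sup>+\<omega>. traj_weight k \<omega> \<partial>q k)"
    by (intro nn_integral_mono nn_integral_q_step_traj_weight_le) (simp add: sets_eq_imp_space_eq[OF sets_q])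
  finally show ?case
    using Suc by simp
qed

end

theorem theorem1:
  fixes \<gamma> :: real and K :: nat
    and Ms :: "'s measure" and Ma :: "'a measure" and Mz :: "'z measure"
    and p0 :: "'s \<Rightarrow> real" and p :: "'s \<Rightarrow> 'a \<Rightarrow> 's \<Rightarrow> real"
    and r :: "'s \<Rightarrow> 'a \<Rightarrow> real"
    and e :: "'s \<Rightarrow> 'z \<Rightarrow> real" and m :: "'z \<Rightarrow> 'a \<Rightarrow> 'z \<Rightarrow> real"
    and pol :: "'z \<Rightarrow> 'a measure"
  assumes gamma: "0 \<le> \<gamma>" "\<gamma> < 1"
    and sfS: "sigma_finite_measure Ms" and sfZ: "sigma_finite_measure Mz"
    and p0_meas: "p0 \<in> borel_measurable Ms"
    and p0_nonneg: "\<And>s. s \<in> space Ms \<Longrightarrow> 0 \<le> p0 s"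
    and p0_norm: "(\<integral>\<^sup>+ s. ennreal (p0 s) \<partial>Ms) = 1"
    and p_meas: "(\<lambda>(s, a, s'). p s a s') \<in> borel_measurable (Ms \<Otimes>\<^sub>M (Ma \<Otimes>\<^sub>M Ms))"
    and p_nonneg: "\<And>s a s'. s \<in> space Ms \<Longrightarrow> a \<in> space Ma \<Longrightarrow> s' \<in> space Ms \<Longrightarrow> 0 \<le> p s a s'"
    and p_norm: "\<And>s a. s \<in> space Ms \<Longrightarrow> a \<in> space Ma \<Longrightarrow> (\<integral>\<^sup>+ s'. ennreal (p s a s') \<partial>Ms) = 1"
    and r_meas: "(\<lambda>(s, a). r s a) \<in> borel_measurable (Ms \<Otimes>\<^sub>M Ma)"
    and r_nonneg: "\<And>s a. s \<in> space Ms \<Longrightarrow> a \<in> space Ma \<Longrightarrow> 0 \<le> r s a"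
    and e_meas: "(\<lambda>(s, z). e s z) \<in> borel_measurable (Ms \<Otimes>\<^sub>M Mz)"
    and e_nonneg: "\<And>s z. s \<in> space Ms \<Longrightarrow> z \<in> space Mz \<Longrightarrow> 0 \<le> e s z"
    and e_norm: "\<And>s. s \<in> space Ms \<Longrightarrow> (\<integral>\<^sup>+ z. ennreal (e s z) \<partial>Mz) = 1"
    and m_meas: "(\<lambda>(z, a, z'). m z a z') \<in> borel_measurable (Mz \<Otimes>\<^sub>M (Ma \<Otimes>\<^sub>M Mz))"
    and m_nonneg: "\<And>z a z'. z \<in> space Mz \<Longrightarrow> a \<in> space Ma \<Longrightarrow> z' \<in> space Mz \<Longrightarrow> 0 \<le> m z a z'"
    and m_norm: "\<And>z a. z \<in> space Mz \<Longrightarrow> a \<in> space Ma \<Longrightarrow> (\<integral>\<^sup>+ z'. ennreal (m z a z') \<partial>Mz) = 1"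
    and pol_kernel: "pol \<in> measurable Mz (prob_algebra Ma)"
    and LK_defined:
      "let f = LK_integrand \<gamma> r e m (Qfun \<gamma> r Ms Ma Mz p e pol) K;
           q = q_traj Ms Ma Mz p0 p e m pol K
       in epos q f \<noteq> \<infinity> \<or> eneg q f \<noteq> \<infinity>"
  shows "ennreal (1 / (1 - \<gamma>)) *
           eexp (eexpect (q_traj Ms Ma Mz p0 p e m pol K)
                   (LK_integrand \<gamma> r e m (Qfun \<gamma> r Ms Ma Mz p e pol) K))
         \<le> true_return \<gamma> r Ms Ma Mz p0 p e pol"
proof -
  interpret latent_mdp \<gamma> Ms Ma Mz p0 p r e m pol
    using gamma sfS sfZ p0_meas p0_norm p_meas p_norm r_meas e_meas e_norm m_meas m_norm pol_kernel
    by (intro latent_mdp.intro) simp_all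
  let ?f = "LK_integrand \<gamma> r e m Q K"
  have q: "prob_space (q K)" "sets (q K) = sets (Traj K)"
    using q_prob by (simp_all add: space_prob_algebra)
  have "eexp (eexpect (q K) ?f) \<le> (\<integral>\<^sup>+\<omega>. eexp (?f \<omega>) \<partial>q K)"
    using LK_defined LK_integrand_measurable
    by (intro eexp_eexpect_le q) (simp_all add: Let_def measurable_cong_sets[OF q(2) refl])
  also have "\<dots> = (\<integral>\<^sup>+\<omega>. traj_weight K \<omega> \<partial>q K)"
    by (simp add: eexp_LK_integrand)
  also have "\<dots> \<le> (\<integral>\<^sup>+x. Q (fst x) (snd x) \<partial>init)"
    by (rule nn_integral_traj_weight_le)
  also have "\<dots> = ennreal (1 - \<gamma>) * true_return \<gamma> r Ms Ma Mz p0 p e pol"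
    by (simp add: Q_eq_discounted_return true_return_eq nn_integral_cmult measurable_cong_sets[OF sets_init refl])
  finally have "ennreal (1 / (1 - \<gamma>)) * eexp (eexpect (q K) ?f)
      \<le> ennreal (1 / (1 - \<gamma>)) * ennreal (1 - \<gamma>) * true_return \<gamma> r Ms Ma Mz p0 p e pol"
    by (simp add: mult.assoc mult_left_mono)
  also have "ennreal (1 / (1 - \<gamma>)) * ennreal (1 - \<gamma>) = 1"
    using gamma by (simp add: ennreal_mult[symmetric])
  finally show ?thesis
    by simp
qed

end
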